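(* Let $\{a_n\}_{n\geq 0}$ be a sequence of non-negative real numbers and let $0<p<1$. If $\{a^p_n\}_{n\geq 0}$ converges to a finite limit $a\in\mathbb{R}$, then $a_n=O(\sqrt{n})$.
   Context: $a^p_n=\sum_{i=0}^n\binom{n}{i}p^i(1-p)^{n-i}a_i$. For $f,g:\mathbb{N}\to\mathbb{R}^+_0$, $f(n)=O(g(n))$ means there is $C>0$ with $f(n)\leq Cg(n)$ for all sufficiently large $n$. *)

theory Defs
  imports "HOL-Analysis.Analysis"
begin

definition binom_transform :: "real \<Rightarrow> (nat \<Rightarrow> real) \<Rightarrow> nat \<Rightarrow> real" where
  "binom_transform p a n = (\<Sum>i=0..n. real (n choose i) * p ^ i * (1 - p) ^ (n - i) * a i)"

end

theory Submission
  imports Defs "HOL-Probability.Hoeffding"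
begin

(* The transform a^p_m is the expectation of a under Bin(m, p); since a is non-negative, a single
   term gives a_n * P(Bin(m, p) = n) <= a^p_m <= B, where B bounds the convergent sequence a^p. Choose m ~ n/p, so that n is a mode of Bin(m, p).
   By Hoeffding's inequality at least half of the mass of Bin(m, p) lies on the at most
   2 sqrt m + 1 integers within distance sqrt m of the mean, so the mode has probability at least
   1 / (2 (2 sqrt m + 1)). Hence a_n <= 2 (2 sqrt (n/p) + 1) B = O(sqrt n). *)

lemma finite_nat_near: "finite {x::nat. \<bar>real x - c\<bar> < t}"
proof (rule finite_subset)
  show "{x::nat. \<bar>real x - c\<bar> < t} \<subseteq> {..nat \<lceil>c + t\<rceil>}"
    by (auto simp: le_nat_iff ceiling_le_iff intro!: le_ceiling_iff[THEN iffD2])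
qed simp

lemma card_nat_near_le:
  fixes c t :: real
  assumes "t \<ge> 0"
  shows "real (card {x::nat. \<bar>real x - c\<bar> < t}) \<le> 2 * t + 1"
proof (cases "{x::nat. \<bar>real x - c\<bar> < t} = {}")
  case False
  define S where "S = {x::nat. \<bar>real x - c\<bar> < t}"
  have fin: "finite S" unfolding S_def by (rule finite_nat_near)
  have "Min S \<in> S" "Max S \<in> S"
    using Min_in[OF fin] Max_in[OF fin] False unfolding S_def by auto
  hence spread: "real (Max S) - real (Min S) < 2 * t" unfolding S_def by auto
  have "S \<subseteq> {Min S..Max S}" using fin by auto
  hence "card S \<le> card {Min S..Max S}" by (intro card_mono) auto
  also have "\<dots> = Max S + 1 - Min S" by simp
  finally have "real (card S) \<le> real (Max S) + 1 - real (Min S)"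
    using Min_le[OF fin \<open>Max S \<in> S\<close>] by (simp add: of_nat_diff)
  thus ?thesis using spread unfolding S_def by linarith
qed (use assms in simp)

lemma binomial_pmf_upper_bound_ge:
  fixes m :: nat and p P :: real
  assumes m: "m > 0" and p: "0 < p" "p < 1"
    and P: "\<And>k. pmf (binomial_pmf m p) k \<le> P"
  shows "1 \<le> 2 * (2 * sqrt m + 1) * P"
proof -
  interpret binomial_distribution m p using p by unfold_locales auto
  define S where "S = {x::nat. \<bar>real x - m * p\<bar> < sqrt m}"
  have "exp (-2::real) \<le> 1/4"
  proof -
    have "1 + 2 + 2\<^sup>2/2 \<le> exp (2::real)" by (rule exp_lower_Taylor_quadratic) simp
    thus ?thesis by (simp add: exp_minus field_simps)
  qed
  hence "measure_pmf.prob (binomial_pmf m p) (UNIV - S) \<le> 1/2"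
    using prob_abs_ge[of "sqrt m"] m unfolding S_def by (simp add: set_diff_eq not_less)
  hence half: "1/2 \<le> measure_pmf.prob (binomial_pmf m p) S"
    using measure_pmf.prob_compl[of S "binomial_pmf m p"] by simp
  have "measure_pmf.prob (binomial_pmf m p) S = sum (pmf (binomial_pmf m p)) S"
    unfolding S_def by (rule measure_measure_pmf_finite[OF finite_nat_near])
  also have "\<dots> \<le> real (card S) * P" using sum_mono[of S "pmf (binomial_pmf m p)" "\<lambda>_. P"] P by simp
  also have "\<dots> \<le> (2 * sqrt m + 1) * P"
    using card_nat_near_le[of "sqrt m" "m * p"] order.trans[OF pmf_nonneg P]
    unfolding S_def by (intro mult_right_mono) auto
  finally show ?thesis using half by linarith
qed

lemma binomial_pmf_Suc_ratio:
  fixes p :: real assumes p: "0 \<le> p" "p \<le> 1" and k: "k < m"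
  shows "pmf (binomial_pmf m p) (Suc k) * ((real k + 1) * (1 - p))
       = pmf (binomial_pmf m p) k * ((real m - real k) * p)"
proof -
  have "real (Suc k * (m choose Suc k)) = real ((m - k) * (m choose k))"
    using binomial_absorption[of k m] binomial_absorb_comp[of m k] by simp
  hence choose: "real (m choose Suc k) * (real k + 1) = real (m choose k) * (real m - real k)"
    using k by (simp add: of_nat_diff algebra_simps)
  have "m - k = Suc (m - Suc k)" using k by simp
  hence "pmf (binomial_pmf m p) k * ((real m - real k) * p)
       = (real (m choose k) * (real m - real k)) * (p ^ k * (1 - p) ^ (m - Suc k) * p * (1 - p))"
    using p by (simp only: pmf_binomial power_Suc mult_ac)
  also have "\<dots> = pmf (binomial_pmf m p) (Suc k) * ((real k + 1) * (1 - p))"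
    using p by (simp only: choose[symmetric] pmf_binomial power_Suc mult_ac)
  finally show ?thesis ..
qed

lemma binomial_pmf_le_mode:
  fixes p :: real
  assumes p: "0 < p" "p < 1" and nm: "n \<le> m"
    and lo: "real n \<le> (real m + 1) * p" and hi: "(real m + 1) * p < real n + 1"
  shows "pmf (binomial_pmf m p) k \<le> pmf (binomial_pmf m p) n"
proof -
  define P where "P = pmf (binomial_pmf m p)"
  have weight_pos: "(real j + 1) * (1 - p) > 0" for j using p by simp
  have sign: "(real m - real j) * p - (real j + 1) * (1 - p) = (real m + 1) * p - (real j + 1)" for j
    by (simp add: algebra_simps)
  have ratio: "P (Suc j) * ((real j + 1) * (1 - p)) = P j * ((real m - real j) * p)" if "j < m" for j
    unfolding P_def using binomial_pmf_Suc_ratio[OF _ _ that] p by (simp del: pmf_binomial)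
  have up: "P j \<le> P (Suc j)" if "j < n" for j
  proof -
    have "(real j + 1) * (1 - p) \<le> (real m - real j) * p" using sign[of j] that lo by linarith
    hence "P j * ((real j + 1) * (1 - p)) \<le> P (Suc j) * ((real j + 1) * (1 - p))"
      using ratio[of j] that nm mult_left_mono[of _ _ "P j"] by (simp add: P_def)
    thus ?thesis using weight_pos[of j] by (rule mult_right_le_imp_le)
  qed
  have down: "P (Suc j) \<le> P j" if "n \<le> j" "j < m" for j
  proof -
    have "(real m - real j) * p \<le> (real j + 1) * (1 - p)" using sign[of j] that hi by linarith
    hence "P (Suc j) * ((real j + 1) * (1 - p)) \<le> P j * ((real j + 1) * (1 - p))"
      using ratio[of j] that mult_left_mono[of _ _ "P j"] by (simp add: P_def)
    thus ?thesis using weight_pos[of j] by (rule mult_right_le_imp_le)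
  qed
  consider "k \<le> n" | "n \<le> k" "k \<le> m" | "m < k" by linarith
  thus ?thesis
  proof cases
    case 1
    have "P k \<le> P n" using 1
    proof (induction rule: dec_induct)
      case (step j)
      thus ?case using up[of j] by linarith
    qed simp
    thus ?thesis unfolding P_def .
  next
    case 2
    have "P k \<le> P n" using 2(1)
    proof (induction rule: dec_induct)
      case (step j)
      thus ?case using down[of j] 2(2) by linarith
    qed simp
    thus ?thesis unfolding P_def .
  next
    case 3
    thus ?thesis using p by (simp add: binomial_eq_0)
  qed
qed

lemma binom_transform_ge_term:
  assumes "\<And>i. a i \<ge> 0" and "0 \<le> p" "p \<le> 1" and "n \<le> m"
  shows "pmf (binomial_pmf m p) n * a n \<le> binom_transform p a m"
  unfolding binom_transform_def pmf_binomial[OF assms(2,3)]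
  by (rule member_le_sum[where f = "\<lambda>i. real (m choose i) * p ^ i * (1 - p) ^ (m - i) * a i"])
     (use assms in auto)

lemma binomial_mode_index_exists:
  fixes p :: real assumes p: "0 < p" "p < 1"
  obtains m where "n \<le> m" "real n \<le> (real m + 1) * p" "(real m + 1) * p < real n + 1"
    "real m \<le> real n / p"
proof -
  define c where "c = \<lceil>real n / p - 1\<rceil>"
  have "real n / p \<le> of_int c + 1" "of_int c < real n / p" unfolding c_def by linarith+
  hence c: "real n \<le> (of_int c + 1) * p" "of_int c * p < real n" "of_int c < real n / p"
    using p by (simp_all add: pos_divide_le_eq pos_less_divide_eq)
  have np: "0 \<le> real n / p" using p by simp
  consider "real (nat c) = of_int c" | "nat c = 0" "c \<le> 0" by (cases "c \<ge> 0") auto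
  hence bounds: "real n \<le> (real (nat c) + 1) * p \<and> (real (nat c) + 1) * p < real n + 1
      \<and> real (nat c) \<le> real n / p"
  proof cases
    case 1
    thus ?thesis using c p by (simp add: algebra_simps)
  next
    case 2
    have "of_int c * p \<le> 0" using 2 p by (simp add: mult_nonpos_nonneg)
    thus ?thesis using 2 c p np by (simp add: algebra_simps)
  qed
  moreover have "(real (nat c) + 1) * p < real (nat c) + 1" using p by simp
  ultimately have "real n < real (nat c) + 1" by linarith
  hence "n \<le> nat c" by linarith
  thus ?thesis using that bounds by blast
qed

lemma binom_transform_bounded_imp_sqrt_bound:
  fixes a :: "nat \<Rightarrow> real" and p B :: real
  assumes nonneg: "\<And>i. a i \<ge> 0" and p: "0 < p" "p < 1"
    and B: "\<And>m. binom_transform p a m \<le> B" and n: "n \<ge> 1"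
  shows "a n \<le> 2 * B * (2 / sqrt p + 1) * sqrt n"
proof -
  obtain m where nm: "n \<le> m" and mode: "real n \<le> (real m + 1) * p" "(real m + 1) * p < real n + 1"
    and m_le: "real m \<le> real n / p"
    using binomial_mode_index_exists[OF p] .
  define P where "P = pmf (binomial_pmf m p) n"
  have term_le: "P * a n \<le> B"
    unfolding P_def using binom_transform_ge_term[of a p n m] nonneg p nm B[of m] by simp
  have mode_ge: "1 \<le> 2 * (2 * sqrt m + 1) * P"
    unfolding P_def using nm n binomial_pmf_le_mode[OF p nm mode]
    by (intro binomial_pmf_upper_bound_ge[OF _ p]) auto
  have sqrt_le: "2 * sqrt m + 1 \<le> (2 / sqrt p + 1) * sqrt n"
  proof -
    have "sqrt m \<le> sqrt (n / p)" using m_le by simp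
    hence "sqrt m \<le> sqrt n / sqrt p" by (simp add: real_sqrt_divide)
    moreover have "1 \<le> sqrt n" using n by simp
    ultimately have "2 * sqrt m + 1 \<le> 2 * (sqrt n / sqrt p) + sqrt n" by linarith
    thus ?thesis by (simp add: algebra_simps)
  qed
  have B_nonneg: "0 \<le> B"
    using term_le nonneg[of n] pmf_nonneg[of "binomial_pmf m p" n] unfolding P_def
    by (metis order.trans mult_nonneg_nonneg)
  have "a n * 1 \<le> a n * (2 * (2 * sqrt m + 1) * P)" by (rule mult_left_mono[OF mode_ge nonneg])
  hence "a n \<le> 2 * (2 * sqrt m + 1) * (P * a n)" by (simp add: ac_simps)
  also have "\<dots> \<le> 2 * (2 * sqrt m + 1) * B" using term_le by (rule mult_left_mono) simp
  also have "\<dots> \<le> 2 * ((2 / sqrt p + 1) * sqrt n) * B"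
    using sqrt_le B_nonneg by (intro mult_right_mono mult_left_mono) auto
  finally show ?thesis by (simp add: ac_simps)
qed

theorem lemma6:
  fixes a :: "nat \<Rightarrow> real" and p L :: real
  assumes nonneg: "\<And>n. a n \<ge> 0"
    and p: "0 < p" "p < 1"
    and lim: "binom_transform p a \<longlonglongrightarrow> L"
  shows "\<exists>C>0. \<forall>\<^sub>F n in sequentially. a n \<le> C * sqrt (real n)"
proof -
  obtain B where B: "B > 0" "\<And>m. norm (binom_transform p a m) \<le> B"
    using convergent_imp_Bseq[OF convergentI[OF lim]] by (auto elim: BseqE)
  define C where "C = 2 * B * (2 / sqrt p + 1)"
  have "C > 0" unfolding C_def using B p by (simp add: add_pos_pos)
  moreover have "\<forall>\<^sub>F n in sequentially. a n \<le> C * sqrt (real n)"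
    unfolding C_def using B(2) abs_le_D1
    by (intro eventually_sequentiallyI[of 1] binom_transform_bounded_imp_sqrt_bound[OF nonneg p]) auto
  ultimately show ?thesis by blast
qed

end
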